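(* Let $f$ be an automorphism of a finite connected (marked) graph $\Gamma$ such that $\langle f\rangle$ acts freely on $\Gamma$ with a single orbit of vertices. Suppose $s$ and $t$ are edges lying in distinct $\langle f\rangle$-orbits and forming a coherently oriented path of length $2$, meeting at $v=\tau(s)=\iota(t)$. Then there is an $\langle f\rangle$-equivariant Whitehead move (an equivariant expansion followed by an equivariant collapse) sliding $s$ along $t$: after the move and relabelling, the graph and the action are unchanged except that now $\tau(s)=\tau(t)$, and correspondingly $\tau(f^i(s))=\tau(f^i(t))$ for all $i$.
   Context: For an oriented edge $e$, $\iota(e)$ is its initial vertex and $\tau(e)$ its terminal vertex. An equivariant expansion replaces vertices by an $\langle f\rangle$-invariant forest (blow-up), and an equivariant collapse contracts an $\langle f\rangle$-invariant forest; both produce a new marked graph with an automorphism realising the same element of $\mathrm{Out}(F_n)$. *)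

theory Defs
  imports Main
begin

definition is_graph :: "'v set \<Rightarrow> 'e set \<Rightarrow> ('e \<Rightarrow> 'v) \<Rightarrow> ('e \<Rightarrow> 'v) \<Rightarrow> ('e \<Rightarrow> 'e) \<Rightarrow> bool" where
  "is_graph V E \<iota> \<tau> bar \<longleftrightarrow>
     (\<forall>e\<in>E. \<iota> e \<in> V \<and> \<tau> e \<in> V \<and> bar e \<in> E \<and> bar e \<noteq> e \<and> bar (bar e) = e \<and> \<iota> (bar e) = \<tau> e)"

fun epath :: "('e \<Rightarrow> 'v) \<Rightarrow> ('e \<Rightarrow> 'v) \<Rightarrow> 'v \<Rightarrow> 'e list \<Rightarrow> 'v \<Rightarrow> bool" where
  "epath \<iota> \<tau> x [] y = (x = y)"
| "epath \<iota> \<tau> x (e # es) y = (\<iota> e = x \<and> epath \<iota> \<tau> (\<tau> e) es y)"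

definition reduced_path :: "('e \<Rightarrow> 'e) \<Rightarrow> 'e list \<Rightarrow> bool" where
  "reduced_path bar es \<longleftrightarrow> (\<forall>i. Suc i < length es \<longrightarrow> es ! Suc i \<noteq> bar (es ! i))"

definition connected_graph :: "'v set \<Rightarrow> 'e set \<Rightarrow> ('e \<Rightarrow> 'v) \<Rightarrow> ('e \<Rightarrow> 'v) \<Rightarrow> bool" where
  "connected_graph V E \<iota> \<tau> \<longleftrightarrow> (\<forall>x\<in>V. \<forall>y\<in>V. \<exists>es. set es \<subseteq> E \<and> epath \<iota> \<tau> x es y)"

definition is_forest :: "'e set \<Rightarrow> ('e \<Rightarrow> 'v) \<Rightarrow> ('e \<Rightarrow> 'v) \<Rightarrow> ('e \<Rightarrow> 'e) \<Rightarrow> 'e set \<Rightarrow> bool" where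
  "is_forest E \<iota> \<tau> bar F \<longleftrightarrow> F \<subseteq> E \<and> bar ` F \<subseteq> F \<and>
     \<not> (\<exists>x es. es \<noteq> [] \<and> set es \<subseteq> F \<and> epath \<iota> \<tau> x es x \<and> reduced_path bar es)"

definition is_aut :: "'v set \<Rightarrow> 'e set \<Rightarrow> ('e \<Rightarrow> 'v) \<Rightarrow> ('e \<Rightarrow> 'v) \<Rightarrow> ('e \<Rightarrow> 'e)
     \<Rightarrow> ('v \<Rightarrow> 'v) \<Rightarrow> ('e \<Rightarrow> 'e) \<Rightarrow> bool" where
  "is_aut V E \<iota> \<tau> bar fV fE \<longleftrightarrow> bij_betw fV V V \<and> bij_betw fE E E \<and>
     (\<forall>e\<in>E. \<iota> (fE e) = fV (\<iota> e) \<and> \<tau> (fE e) = fV (\<tau> e) \<and> fE (bar e) = bar (fE e))"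

text \<open>The cyclic group generated by the automorphism acts freely: a power of f that
  fixes a vertex, or fixes or inverts an edge, is the identity.  (Since the graph is
  finite, f has finite order, so natural-number powers exhaust the group.)\<close>
definition acts_freely :: "'v set \<Rightarrow> 'e set \<Rightarrow> ('e \<Rightarrow> 'e) \<Rightarrow> ('v \<Rightarrow> 'v) \<Rightarrow> ('e \<Rightarrow> 'e) \<Rightarrow> bool" where
  "acts_freely V E bar fV fE \<longleftrightarrow> (\<forall>k::nat.
     ((\<exists>x\<in>V. (fV ^^ k) x = x) \<or> (\<exists>e\<in>E. (fE ^^ k) e = e \<or> (fE ^^ k) e = bar e))
     \<longrightarrow> (\<forall>x\<in>V. (fV ^^ k) x = x) \<and> (\<forall>e\<in>E. (fE ^^ k) e = e))"

text \<open>Equivariant collapse: the graph (V',E',...) with automorphism (fV',fE') is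
  (isomorphic, via pV and pE, to) the quotient of (V,E,...) with automorphism (gV,gE)
  obtained by collapsing each component of the forest F to a point, compatibly
  with the automorphisms.\<close>
definition eq_collapse ::
  "'a set \<Rightarrow> 'b set \<Rightarrow> ('b \<Rightarrow> 'a) \<Rightarrow> ('b \<Rightarrow> 'a) \<Rightarrow> ('b \<Rightarrow> 'b) \<Rightarrow> ('a \<Rightarrow> 'a) \<Rightarrow> ('b \<Rightarrow> 'b)
   \<Rightarrow> 'b set
   \<Rightarrow> 'v set \<Rightarrow> 'e set \<Rightarrow> ('e \<Rightarrow> 'v) \<Rightarrow> ('e \<Rightarrow> 'v) \<Rightarrow> ('e \<Rightarrow> 'e) \<Rightarrow> ('v \<Rightarrow> 'v) \<Rightarrow> ('e \<Rightarrow> 'e)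
   \<Rightarrow> ('a \<Rightarrow> 'v) \<Rightarrow> ('b \<Rightarrow> 'e) \<Rightarrow> bool" where
  "eq_collapse VD ED \<iota>D \<tau>D barD gV gE F V E \<iota> \<tau> bar fV fE pV pE \<longleftrightarrow>
     pV ` VD = V \<and>
     (\<forall>x\<in>VD. \<forall>y\<in>VD. pV x = pV y \<longleftrightarrow> (\<exists>es. set es \<subseteq> F \<and> epath \<iota>D \<tau>D x es y)) \<and>
     bij_betw pE (ED - F) E \<and>
     (\<forall>e\<in>ED - F. \<iota> (pE e) = pV (\<iota>D e) \<and> \<tau> (pE e) = pV (\<tau>D e) \<and> bar (pE e) = pE (barD e)) \<and>
     (\<forall>x\<in>VD. pV (gV x) = fV (pV x)) \<and>
     (\<forall>e\<in>ED - F. pE (gE e) = fE (pE e))"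

text \<open>An equivariant Whitehead move from (V,E,\<iota>,\<tau>,bar) with automorphism (fV,fE)
  to (V',E',\<iota>',\<tau>',bar') with automorphism (fV',fE'): an equivariant expansion of the
  first graph to a finite graph D (with automorphism g), followed by an equivariant
  collapse of D to the second graph.  Vertices and edges of D are represented by natural numbers (every
  finite graph is isomorphic to such a one).\<close>
definition eq_whitehead_move ::
  "'v set \<Rightarrow> 'e set \<Rightarrow> ('e \<Rightarrow> 'v) \<Rightarrow> ('e \<Rightarrow> 'v) \<Rightarrow> ('e \<Rightarrow> 'e) \<Rightarrow> ('v \<Rightarrow> 'v) \<Rightarrow> ('e \<Rightarrow> 'e)
   \<Rightarrow> 'w set \<Rightarrow> 'f set \<Rightarrow> ('f \<Rightarrow> 'w) \<Rightarrow> ('f \<Rightarrow> 'w) \<Rightarrow> ('f \<Rightarrow> 'f) \<Rightarrow> ('w \<Rightarrow> 'w) \<Rightarrow> ('f \<Rightarrow> 'f)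
   \<Rightarrow> bool" where
  "eq_whitehead_move V E \<iota> \<tau> bar fV fE V' E' \<iota>' \<tau>' bar' fV' fE' \<longleftrightarrow>
     (\<exists>(VD::nat set) (ED::nat set) \<iota>D \<tau>D barD gV gE F1 F2 pV1 pE1 pV2 pE2.
        finite VD \<and> finite ED \<and> is_graph VD ED \<iota>D \<tau>D barD \<and>
        is_aut VD ED \<iota>D \<tau>D barD gV gE \<and>
        is_forest ED \<iota>D \<tau>D barD F1 \<and> gE ` F1 \<subseteq> F1 \<and>
        is_forest ED \<iota>D \<tau>D barD F2 \<and> gE ` F2 \<subseteq> F2 \<and>
        eq_collapse VD ED \<iota>D \<tau>D barD gV gE F1 V E \<iota> \<tau> bar fV fE pV1 pE1 \<and>
        eq_collapse VD ED \<iota>D \<tau>D barD gV gE F2 V' E' \<iota>' \<tau>' bar' fV' fE' pV2 pE2)"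

end

theory Submission
  imports Defs
begin

text \<open>Blow up every vertex x into an edge joining x to a new vertex x', and attach at x' the
  T-edge starting at x together with the terminal ends of the S-edges ending at x.  Collapsing the
  new edges gives back the original graph; collapsing instead the T-edges identifies x' with the
  terminal vertex of the T-edge at x, so each S-edge now ends where the corresponding T-edge ends.
  Both forests are invariant, so this is an equivariant Whitehead move.  For S and T the orbits
  of s and t, freeness and the single vertex orbit make T contain exactly one edge starting at
  each vertex and no edge together with its reverse, while the hypothesis on distinct orbits
  keeps S away from T and its reverse.\<close>

section \<open>Forests of leaf edges\<close>

lemma epath_append:
  "epath \<iota> \<tau> x (xs @ ys) z \<longleftrightarrow> (\<exists>y. epath \<iota> \<tau> x xs y \<and> epath \<iota> \<tau> y ys z)"
  by (induction xs arbitrary: x) auto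

lemma epath_imp_same_image:
  assumes "\<forall>e\<in>F. p (\<iota> e) = p (\<tau> e)" and "epath \<iota> \<tau> x es y" and "set es \<subseteq> F"
  shows "p x = p y"
  using assms by (induction es arbitrary: x) auto

text \<open>F is a union of stars whose leaves lie in W.\<close>

definition leaf_edges :: "('e \<Rightarrow> 'v) \<Rightarrow> ('e \<Rightarrow> 'v) \<Rightarrow> 'v set \<Rightarrow> 'e set \<Rightarrow> bool" where
  "leaf_edges \<iota> \<tau> W F \<longleftrightarrow>
     (\<forall>e\<in>F. (\<iota> e \<in> W) \<noteq> (\<tau> e \<in> W)) \<and>
     (\<forall>e\<in>F. \<forall>e'\<in>F. \<iota> e \<in> W \<longrightarrow> \<iota> e' = \<iota> e \<longrightarrow> e' = e)"

lemma leaf_edges_backtrack: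
  assumes gr: "is_graph V E \<iota> \<tau> bar" and F: "F \<subseteq> E" "bar ` F \<subseteq> F"
    and leaf: "leaf_edges \<iota> \<tau> W F"
    and e: "e \<in> F" "e' \<in> F" "\<tau> e = \<iota> e'" "\<tau> e \<in> W"
  shows "e' = bar e"
proof -
  have "bar e \<in> F" "\<iota> (bar e) = \<tau> e" using gr F e(1) unfolding is_graph_def by auto
  then show ?thesis using leaf e unfolding leaf_edges_def by auto
qed

text \<open>A reduced path in F cannot pass through a leaf, so a reduced circuit in F would have at
  most two edges.\<close>

lemma is_forest_if_leaf_edges:
  assumes gr: "is_graph V E \<iota> \<tau> bar" and F: "F \<subseteq> E" "bar ` F \<subseteq> F"
    and leaf: "leaf_edges \<iota> \<tau> W F"
  shows "is_forest E \<iota> \<tau> bar F"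
  unfolding is_forest_def
proof (intro conjI F notI, elim exE conjE)
  fix x es assume ne: "es \<noteq> []" and sF: "set es \<subseteq> F" and p: "epath \<iota> \<tau> x es x"
    and red: "reduced_path bar es"
  have one_end: "(\<iota> e \<in> W) \<noteq> (\<tau> e \<in> W)" if "e \<in> F" for e
    using leaf that unfolding leaf_edges_def by blast
  note backtrack = leaf_edges_backtrack[OF gr F leaf]
  have bar_bar: "bar (bar e) = e" if "e \<in> F" for e using gr F that unfolding is_graph_def by auto
  have no_backtrack: "es ! Suc i \<noteq> bar (es ! i)" if "Suc i < length es" for i
    using red that unfolding reduced_path_def by blast
  consider a where "es = [a]" | a b where "es = [a, b]" | a b c rest where "es = a # b # c # rest"
    using ne by (cases es; cases "tl es"; cases "tl (tl es)") auto
  then show False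
  proof cases
    case (1 a)
    then have "a \<in> F" "\<tau> a = \<iota> a" using p sF by auto
    then show False using one_end[of a] by simp
  next
    case (2 a b)
    then have ab: "a \<in> F" "b \<in> F" "\<tau> a = \<iota> b" "\<tau> b = \<iota> a" "b \<noteq> bar a"
      using p sF no_backtrack[of 0] by auto
    show False
    proof (cases "\<tau> a \<in> W")
      case True then show False using backtrack[of a b] ab by simp
    next
      case False
      then have "a = bar b" using backtrack[of b a] ab one_end[of a] by simp
      then show False using ab bar_bar[of b] by simp
    qed
  next
    case (3 a b c rest)
    then have "a \<in> F" "b \<in> F" "c \<in> F" "\<tau> a = \<iota> b" "\<tau> b = \<iota> c" "b \<noteq> bar a" "c \<noteq> bar b"
      using p sF no_backtrack[of 0] no_backtrack[of 1] by auto
    then show False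
      using one_end[of b] backtrack[of a b] backtrack[of b c] by (cases "\<tau> b \<in> W") auto
  qed
qed

lemma collapse_fibres_if_leaf_edges:
  assumes gr: "is_graph V E \<iota> \<tau> bar" and F: "F \<subseteq> E" "bar ` F \<subseteq> F"
    and leaf: "leaf_edges \<iota> \<tau> W F"
    and covered: "\<forall>x\<in>V \<inter> W. \<exists>e\<in>F. \<iota> e = x"
    and p_edges: "\<forall>e\<in>F. p (\<iota> e) = p (\<tau> e)"
    and p_inj: "inj_on p (V - W)"
  shows "\<forall>x\<in>V. \<forall>y\<in>V. p x = p y \<longleftrightarrow> (\<exists>es. set es \<subseteq> F \<and> epath \<iota> \<tau> x es y)"
proof (intro ballI iffI)
  fix x y assume "\<exists>es. set es \<subseteq> F \<and> epath \<iota> \<tau> x es y"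
  then obtain es where "set es \<subseteq> F" "epath \<iota> \<tau> x es y" by blast
  then show "p x = p y" using epath_imp_same_image[of F p \<iota> \<tau> x es y] p_edges by blast
next
  have to_root: "\<exists>x'\<in>V - W. p x' = p x \<and> (\<exists>es. set es \<subseteq> F \<and> epath \<iota> \<tau> x es x')
      \<and> (\<exists>es. set es \<subseteq> F \<and> epath \<iota> \<tau> x' es x)" if x: "x \<in> V" for x
  proof (cases "x \<in> W")
    case False then show ?thesis using x by (intro bexI[of _ x]) (auto intro: exI[of _ "[]"])
  next
    case True
    then obtain e where e: "e \<in> F" "\<iota> e = x" using covered x by blast
    have bar_e: "bar e \<in> F" "\<iota> (bar e) = \<tau> e" "\<tau> (bar e) = \<iota> e" and "\<tau> e \<in> V"
      using gr F e(1) unfolding is_graph_def by (auto, metis subsetD)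
    moreover have "\<tau> e \<notin> W" using True leaf e unfolding leaf_edges_def by auto
    ultimately have "\<tau> e \<in> V - W" by blast
    moreover have "p (\<tau> e) = p x" using p_edges e by metis
    moreover have "set [e] \<subseteq> F \<and> epath \<iota> \<tau> x [e] (\<tau> e)" using e by simp
    moreover have "set [bar e] \<subseteq> F \<and> epath \<iota> \<tau> (\<tau> e) [bar e] x" using bar_e e by simp
    ultimately show ?thesis by blast
  qed
  fix x y assume x: "x \<in> V" and y: "y \<in> V" and eq: "p x = p y"
  obtain x' es1 where x': "x' \<in> V - W" "p x' = p x" "set es1 \<subseteq> F" "epath \<iota> \<tau> x es1 x'"
    using to_root[OF x] by blast
  obtain y' es2 where y': "y' \<in> V - W" "p y' = p y" "set es2 \<subseteq> F" "epath \<iota> \<tau> y' es2 y"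
    using to_root[OF y] by blast
  have "x' = y'" using inj_onD[OF p_inj, of x' y'] x' y' eq by simp
  then have "epath \<iota> \<tau> x (es1 @ es2) y" unfolding epath_append using x' y' by blast
  then show "\<exists>es. set es \<subseteq> F \<and> epath \<iota> \<tau> x es y"
    using x'(3) y'(3) by (intro exI[of _ "es1 @ es2"]) simp
qed

section \<open>Relabelling the intermediate graph\<close>

text \<open>eq_whitehead_move asks for the intermediate graph on natural numbers; any finite
  graph can be transported there along injections.\<close>

lemma map_of_set_subset_image:
  assumes "set ys \<subseteq> f ` A"
  obtains xs where "set xs \<subseteq> A" "ys = map f xs"
  using assms lists_image[of f A] unfolding lists_eq_set by blast

lemma bij_betw_conjugate:
  assumes "bij_betw g A A" "inj_on h A"
  shows "bij_betw (h \<circ> g \<circ> inv_into A h) (h ` A) (h ` A)"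
proof -
  have h: "bij_betw h A (h ` A)" using assms(2) by (rule inj_on_imp_bij_betw)
  show ?thesis
    by (rule bij_betw_trans[OF bij_betw_inv_into[OF h] bij_betw_trans[OF assms(1) h]])
qed

context
  fixes VD :: "'a set" and ED :: "'b set" and hV :: "'a \<Rightarrow> 'c" and hE :: "'b \<Rightarrow> 'd"
  assumes inj_hV: "inj_on hV VD" and inj_hE: "inj_on hE ED"
begin

lemma epath_relabel:
  assumes ends: "\<forall>e\<in>ED. \<iota> e \<in> VD \<and> \<tau> e \<in> VD"
    and es: "set es \<subseteq> ED" and x: "x \<in> VD" and y: "y \<in> VD"
  shows "epath (hV \<circ> \<iota> \<circ> inv_into ED hE) (hV \<circ> \<tau> \<circ> inv_into ED hE) (hV x) (map hE es) (hV y)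
     \<longleftrightarrow> epath \<iota> \<tau> x es y"
  using es x
proof (induction es arbitrary: x)
  case Nil then show ?case using inj_hV y by (simp add: inj_on_eq_iff)
next
  case (Cons e es)
  then show ?case using inj_hE inj_hV ends by (simp add: inj_on_eq_iff)
qed

lemma reduced_path_relabel:
  assumes bar: "\<forall>e\<in>ED. bar e \<in> ED" and es: "set es \<subseteq> ED"
  shows "reduced_path (hE \<circ> bar \<circ> inv_into ED hE) (map hE es) \<longleftrightarrow> reduced_path bar es"
proof -
  have "es ! i \<in> ED" if "i < length es" for i using es that by auto
  then show ?thesis
    unfolding reduced_path_def using inj_hE bar by (auto simp: inj_on_eq_iff)
qed

lemma is_graph_relabel:
  assumes "is_graph VD ED \<iota> \<tau> bar"
  shows "is_graph (hV ` VD) (hE ` ED) (hV \<circ> \<iota> \<circ> inv_into ED hE) (hV \<circ> \<tau> \<circ> inv_into ED hE)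
     (hE \<circ> bar \<circ> inv_into ED hE)"
  using assms inj_hE unfolding is_graph_def by (auto simp: inj_on_eq_iff)

lemma is_aut_relabel:
  assumes "is_graph VD ED \<iota> \<tau> bar" "is_aut VD ED \<iota> \<tau> bar gV gE"
  shows "is_aut (hV ` VD) (hE ` ED) (hV \<circ> \<iota> \<circ> inv_into ED hE) (hV \<circ> \<tau> \<circ> inv_into ED hE)
     (hE \<circ> bar \<circ> inv_into ED hE) (hV \<circ> gV \<circ> inv_into VD hV) (hE \<circ> gE \<circ> inv_into ED hE)"
proof -
  have "gE e \<in> ED" "\<iota> e \<in> VD" "\<tau> e \<in> VD" "bar e \<in> ED" if "e \<in> ED" for e
    using assms that unfolding is_graph_def is_aut_def bij_betw_def by auto
  moreover have "bij_betw (hV \<circ> gV \<circ> inv_into VD hV) (hV ` VD) (hV ` VD)"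
    "bij_betw (hE \<circ> gE \<circ> inv_into ED hE) (hE ` ED) (hE ` ED)"
    using assms(2) inj_hV inj_hE bij_betw_conjugate unfolding is_aut_def by blast+
  ultimately show ?thesis
    using assms(2) inj_hV inj_hE unfolding is_aut_def by auto
qed

lemma is_forest_relabel:
  assumes gr: "is_graph VD ED \<iota> \<tau> bar" and F: "is_forest ED \<iota> \<tau> bar F"
  shows "is_forest (hE ` ED) (hV \<circ> \<iota> \<circ> inv_into ED hE) (hV \<circ> \<tau> \<circ> inv_into ED hE)
     (hE \<circ> bar \<circ> inv_into ED hE) (hE ` F)"
  unfolding is_forest_def
proof (intro conjI notI)
  have FE: "F \<subseteq> ED" and Fbar: "bar ` F \<subseteq> F" using F unfolding is_forest_def by auto
  then show "hE ` F \<subseteq> hE ` ED" "(hE \<circ> bar \<circ> inv_into ED hE) ` hE ` F \<subseteq> hE ` F"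
    using inj_hE by (auto simp: image_comp subsetD)
  have ends: "\<forall>e\<in>ED. \<iota> e \<in> VD \<and> \<tau> e \<in> VD" and bar: "\<forall>e\<in>ED. bar e \<in> ED"
    using gr unfolding is_graph_def by auto
  assume "\<exists>x es. es \<noteq> [] \<and> set es \<subseteq> hE ` F \<and>
    epath (hV \<circ> \<iota> \<circ> inv_into ED hE) (hV \<circ> \<tau> \<circ> inv_into ED hE) x es x \<and>
    reduced_path (hE \<circ> bar \<circ> inv_into ED hE) es"
  then obtain x es where ne: "es \<noteq> []" and esF: "set es \<subseteq> F"
    and p: "epath (hV \<circ> \<iota> \<circ> inv_into ED hE) (hV \<circ> \<tau> \<circ> inv_into ED hE) x (map hE es) x"
    and red: "reduced_path (hE \<circ> bar \<circ> inv_into ED hE) (map hE es)"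
    by (metis map_of_set_subset_image map_is_Nil_conv)
  have esE: "set es \<subseteq> ED" using esF FE by auto
  obtain e rest where e: "es = e # rest" using ne by (cases es) auto
  then have "x = hV (\<iota> e)" "\<iota> e \<in> VD" using p esE inj_hE ends by auto
  then have "epath \<iota> \<tau> (\<iota> e) es (\<iota> e)" using p epath_relabel[OF ends esE] by auto
  moreover have "reduced_path bar es" using red reduced_path_relabel[OF bar esE] by simp
  ultimately show False using F ne esF unfolding is_forest_def by blast
qed

lemma eq_collapse_relabel:
  assumes gr: "is_graph VD ED \<iota> \<tau> bar" and aut: "is_aut VD ED \<iota> \<tau> bar gV gE"
    and FE: "F \<subseteq> ED" and c: "eq_collapse VD ED \<iota> \<tau> bar gV gE F V E \<iota>' \<tau>' bar' fV fE pV pE"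
  shows "eq_collapse (hV ` VD) (hE ` ED) (hV \<circ> \<iota> \<circ> inv_into ED hE) (hV \<circ> \<tau> \<circ> inv_into ED hE)
     (hE \<circ> bar \<circ> inv_into ED hE) (hV \<circ> gV \<circ> inv_into VD hV) (hE \<circ> gE \<circ> inv_into ED hE) (hE ` F)
     V E \<iota>' \<tau>' bar' fV fE (pV \<circ> inv_into VD hV) (pE \<circ> inv_into ED hE)"
proof -
  have ends: "\<forall>e\<in>ED. \<iota> e \<in> VD \<and> \<tau> e \<in> VD" and bar: "\<forall>e\<in>ED. bar e \<in> ED"
    using gr unfolding is_graph_def by auto
  have closed: "\<forall>x\<in>VD. gV x \<in> VD" "\<forall>e\<in>ED. gE e \<in> ED"
    using aut unfolding is_aut_def bij_betw_def by auto
  have diff: "hE ` ED - hE ` F = hE ` (ED - F)"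
    using inj_on_image_set_diff[OF inj_hE Diff_subset FE] by simp
  have "bij_betw pE (ED - F) E" using c unfolding eq_collapse_def by blast
  then have bij: "bij_betw (pE \<circ> inv_into ED hE) (hE ` ED - hE ` F) E"
    unfolding diff
    by (rule bij_betw_trans[OF bij_betw_inv_into_subset[OF inj_on_imp_bij_betw[OF inj_hE]
          Diff_subset refl]])
  have paths: "(\<exists>es'. set es' \<subseteq> hE ` F \<and>
      epath (hV \<circ> \<iota> \<circ> inv_into ED hE) (hV \<circ> \<tau> \<circ> inv_into ED hE) (hV x) es' (hV y))
    \<longleftrightarrow> (\<exists>es. set es \<subseteq> F \<and> epath \<iota> \<tau> x es y)" if "x \<in> VD" "y \<in> VD" for x y
  proof
    assume "\<exists>es'. set es' \<subseteq> hE ` F \<and>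
      epath (hV \<circ> \<iota> \<circ> inv_into ED hE) (hV \<circ> \<tau> \<circ> inv_into ED hE) (hV x) es' (hV y)"
    then obtain es where "set es \<subseteq> F"
      "epath (hV \<circ> \<iota> \<circ> inv_into ED hE) (hV \<circ> \<tau> \<circ> inv_into ED hE) (hV x) (map hE es) (hV y)"
      by (metis map_of_set_subset_image)
    then show "\<exists>es. set es \<subseteq> F \<and> epath \<iota> \<tau> x es y"
      using epath_relabel[OF ends _ that] FE by blast
  next
    assume "\<exists>es. set es \<subseteq> F \<and> epath \<iota> \<tau> x es y"
    then obtain es where "set es \<subseteq> F" "epath \<iota> \<tau> x es y" by blast
    then show "\<exists>es'. set es' \<subseteq> hE ` F \<and>
      epath (hV \<circ> \<iota> \<circ> inv_into ED hE) (hV \<circ> \<tau> \<circ> inv_into ED hE) (hV x) es' (hV y)"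
      using epath_relabel[OF ends _ that] FE by (intro exI[of _ "map hE es"]) auto
  qed
  show ?thesis
    using c inj_hV inj_hE ends bar paths FE bij closed
    unfolding eq_collapse_def diff by (auto simp: image_comp)
qed

end

lemma eq_whitehead_moveI:
  fixes VD :: "'a set" and ED :: "'b set"
  assumes fin: "finite VD" "finite ED" and gr: "is_graph VD ED \<iota>D \<tau>D barD"
    and aut: "is_aut VD ED \<iota>D \<tau>D barD gV gE"
    and F1: "is_forest ED \<iota>D \<tau>D barD F1" "gE ` F1 \<subseteq> F1"
    and F2: "is_forest ED \<iota>D \<tau>D barD F2" "gE ` F2 \<subseteq> F2"
    and c1: "eq_collapse VD ED \<iota>D \<tau>D barD gV gE F1 V E \<iota> \<tau> bar fV fE pV1 pE1"
    and c2: "eq_collapse VD ED \<iota>D \<tau>D barD gV gE F2 V' E' \<iota>' \<tau>' bar' fV' fE' pV2 pE2"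
  shows "eq_whitehead_move V E \<iota> \<tau> bar fV fE V' E' \<iota>' \<tau>' bar' fV' fE'"
proof -
  obtain hV :: "'a \<Rightarrow> nat" where hV: "inj_on hV VD" using fin finite_imp_inj_to_nat_seg by blast
  obtain hE :: "'b \<Rightarrow> nat" where hE: "inj_on hE ED" using fin finite_imp_inj_to_nat_seg by blast
  have FE: "F1 \<subseteq> ED" "F2 \<subseteq> ED" using F1 F2 unfolding is_forest_def by auto
  have "(hE \<circ> gE \<circ> inv_into ED hE) (hE e) = hE (gE e)" if "e \<in> ED" for e
    using hE that by simp
  then have "(hE \<circ> gE \<circ> inv_into ED hE) ` hE ` F = hE ` gE ` F" if "F \<subseteq> ED" for F
    using that unfolding image_image by (intro image_cong) auto
  then have "(hE \<circ> gE \<circ> inv_into ED hE) ` hE ` F1 \<subseteq> hE ` F1"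
    "(hE \<circ> gE \<circ> inv_into ED hE) ` hE ` F2 \<subseteq> hE ` F2"
    using FE F1(2) F2(2) by (simp_all add: image_mono)
  moreover have "finite (hV ` VD)" "finite (hE ` ED)" using fin by simp_all
  ultimately show ?thesis
    unfolding eq_whitehead_move_def
    using is_graph_relabel[OF hV hE gr] is_aut_relabel[OF hV hE gr aut]
      is_forest_relabel[OF hV hE gr F1(1)] is_forest_relabel[OF hV hE gr F2(1)]
      eq_collapse_relabel[OF hV hE gr aut FE(1) c1] eq_collapse_relabel[OF hV hE gr aut FE(2) c2]
    by (intro exI conjI) assumption+
qed

section \<open>Orbits of iterated maps\<close>

definition funpow_orbit :: "('a \<Rightarrow> 'a) \<Rightarrow> 'a \<Rightarrow> 'a set" where
  "funpow_orbit f x = range (\<lambda>k. (f ^^ k) x)"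

lemma funpow_orbitI [intro]: "(f ^^ k) x \<in> funpow_orbit f x"
  unfolding funpow_orbit_def by blast

lemma self_in_funpow_orbit: "x \<in> funpow_orbit f x"
  using funpow_orbitI[where k = 0] by simp

lemma funpow_orbit_trans:
  "y \<in> funpow_orbit f x \<Longrightarrow> z \<in> funpow_orbit f y \<Longrightarrow> z \<in> funpow_orbit f x"
  unfolding funpow_orbit_def
  by (auto simp: funpow_add[symmetric, THEN fun_cong, unfolded comp_def])

lemma funpow_orbit_subset: "f ` A \<subseteq> A \<Longrightarrow> x \<in> A \<Longrightarrow> funpow_orbit f x \<subseteq> A"
proof -
  assume "f ` A \<subseteq> A" "x \<in> A"
  then have "(f ^^ k) x \<in> A" for k by (induction k) auto
  then show ?thesis unfolding funpow_orbit_def by blast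
qed

lemma funpow_orbit_image:
  assumes "finite A" "bij_betw f A A" "x \<in> A"
  shows "f ` funpow_orbit f x = funpow_orbit f x"
proof (rule endo_inj_surj)
  have sub: "funpow_orbit f x \<subseteq> A"
    using assms(2,3) by (intro funpow_orbit_subset) (auto simp: bij_betw_def)
  then show "finite (funpow_orbit f x)" using assms(1) by (rule finite_subset)
  have "f ((f ^^ k) x) \<in> funpow_orbit f x" for k using funpow_orbitI[where k = "Suc k"] by simp
  then show "f ` funpow_orbit f x \<subseteq> funpow_orbit f x" by (auto simp: funpow_orbit_def)
  show "inj_on f (funpow_orbit f x)"
    using sub assms(2) by (auto simp: bij_betw_def intro: inj_on_subset)
qed

lemma funpow_preimage_in_invariant_set:
  assumes "inj_on f A" "f ` A \<subseteq> A" "X \<subseteq> f ` X" "X \<subseteq> A" "x \<in> A" "(f ^^ k) x \<in> X"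
  shows "x \<in> X"
  using assms(5,6)
proof (induction k arbitrary: x)
  case 0 then show ?case by simp
next
  case (Suc k)
  have "f x \<in> A" using assms(2) Suc.prems(1) by blast
  moreover have "(f ^^ k) (f x) \<in> X"
    using Suc.prems(2) by (simp add: funpow_Suc_right del: funpow.simps)
  ultimately have "f x \<in> X" by (rule Suc.IH)
  then obtain z where z: "z \<in> X" "f x = f z" using assms(3) by auto
  then show ?case using inj_onD[OF assms(1) z(2)] assms(4) Suc.prems(1) by auto
qed

lemma funpow_orbit_sym:
  assumes "finite A" "bij_betw f A A" "x \<in> A" "y \<in> funpow_orbit f x"
  shows "x \<in> funpow_orbit f y"
proof -
  have A: "inj_on f A" "f ` A \<subseteq> A" using assms(2) by (auto simp: bij_betw_def)
  have y: "y \<in> A" using funpow_orbit_subset[OF A(2) assms(3)] assms(4) by blast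
  obtain k where "(f ^^ k) x = y" using assms(4) unfolding funpow_orbit_def by blast
  then show ?thesis
    using funpow_preimage_in_invariant_set[OF A, of "funpow_orbit f y" x k]
      funpow_orbit_image[OF assms(1,2) y] funpow_orbit_subset[OF A(2) y] assms(3)
      self_in_funpow_orbit[of y f] by simp
qed

lemma funpow_orbit_disjoint:
  assumes "finite A" "bij_betw f A A" "x \<in> A" "x \<notin> funpow_orbit f y"
  shows "funpow_orbit f x \<inter> funpow_orbit f y = {}"
proof (rule ccontr)
  assume "funpow_orbit f x \<inter> funpow_orbit f y \<noteq> {}"
  then obtain z where z: "z \<in> funpow_orbit f x" "z \<in> funpow_orbit f y" by blast
  have "x \<in> funpow_orbit f y"
    using funpow_orbit_trans[OF z(2) funpow_orbit_sym[OF assms(1-3) z(1)]] .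
  then show False using assms(4) by blast
qed

lemma is_aut_funpow:
  assumes "is_aut V E \<iota> \<tau> bar fV fE"
  shows "is_aut V E \<iota> \<tau> bar (fV ^^ k) (fE ^^ k)"
proof (induction k)
  case 0 then show ?case by (simp add: is_aut_def bij_betw_id[unfolded id_def])
next
  case (Suc k)
  have "fE e \<in> E" if "e \<in> E" for e using assms that unfolding is_aut_def bij_betw_def by auto
  then show ?case
    using Suc assms bij_betw_funpow[of fV V "Suc k"] bij_betw_funpow[of fE E "Suc k"]
    unfolding is_aut_def by (simp add: funpow_Suc_right del: funpow.simps)
qed

lemma funpow_orbit_eq_single_orbit:
  assumes "finite A" "bij_betw f A A" "A = funpow_orbit f a" "x \<in> A"
  shows "funpow_orbit f x = A"
proof
  have "f ` A \<subseteq> A" using assms(2) by (simp add: bij_betw_def)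
  then show "funpow_orbit f x \<subseteq> A" using assms(4) by (rule funpow_orbit_subset)
  have "a \<in> A" using assms(3) self_in_funpow_orbit by metis
  then have "a \<in> funpow_orbit f x" using funpow_orbit_sym[OF assms(1,2), of a x] assms(3,4) by simp
  then show "A \<subseteq> funpow_orbit f x" using assms(3) funpow_orbit_trans[of a f x] by auto
qed

context
  fixes V :: "'v set" and E :: "'e set" and \<iota> \<tau> :: "'e \<Rightarrow> 'v" and bar :: "'e \<Rightarrow> 'e"
    and fV :: "'v \<Rightarrow> 'v" and fE :: "'e \<Rightarrow> 'e"
  assumes aut: "is_aut V E \<iota> \<tau> bar fV fE"
begin

lemma funpow_edge:
  assumes "e \<in> E"
  shows "(fE ^^ k) e \<in> E" "\<iota> ((fE ^^ k) e) = (fV ^^ k) (\<iota> e)"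
    "\<tau> ((fE ^^ k) e) = (fV ^^ k) (\<tau> e)" "(fE ^^ k) (bar e) = bar ((fE ^^ k) e)"
  using is_aut_funpow[OF aut, of k] assms unfolding is_aut_def bij_betw_def by auto

lemma funpow_vertex: "x \<in> V \<Longrightarrow> (fV ^^ k) x \<in> V" "inj_on (fV ^^ k) V"
  using is_aut_funpow[OF aut, of k] unfolding is_aut_def bij_betw_def by auto

lemma bar_image_funpow_orbit: "e \<in> E \<Longrightarrow> bar ` funpow_orbit fE e = funpow_orbit fE (bar e)"
  unfolding funpow_orbit_def by (auto simp: funpow_edge image_image)

lemma iota_image_funpow_orbit: "e \<in> E \<Longrightarrow> \<iota> ` funpow_orbit fE e = funpow_orbit fV (\<iota> e)"
  unfolding funpow_orbit_def by (auto simp: funpow_edge image_image)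

context
  assumes free: "acts_freely V E bar fV fE"
begin

lemma acts_freely_funpow_eq:
  assumes x: "x \<in> V" and eq: "(fV ^^ a) x = (fV ^^ b) x" and e: "e \<in> E"
  shows "(fE ^^ a) e = (fE ^^ b) e"
proof -
  have le: "(fE ^^ a) e = (fE ^^ b) e" if ab: "a \<le> b" and eq_ab: "(fV ^^ a) x = (fV ^^ b) x" for a b
  proof -
    obtain d where b: "b = a + d" using le_Suc_ex[OF ab] by blast
    have "inj_on (fV ^^ a) V" "(fV ^^ d) x \<in> V" using funpow_vertex x by auto
    moreover have "(fV ^^ a) ((fV ^^ d) x) = (fV ^^ a) x" using eq_ab b by (simp add: funpow_add)
    ultimately have "(fV ^^ d) x = x" using x by (auto dest: inj_onD)
    then have "(fE ^^ d) e = e" using free x e unfolding acts_freely_def by blast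
    then show ?thesis using b by (simp add: funpow_add)
  qed
  show ?thesis
  proof (cases "a \<le> b")
    case True show ?thesis using le[OF True eq] .
  next
    case False then show ?thesis using le[of b a, OF _ eq[symmetric]] by simp
  qed
qed

lemma funpow_orbit_no_inversion:
  assumes gr: "is_graph V E \<iota> \<tau> bar" and fin: "finite E" and t: "t \<in> E"
  shows "funpow_orbit fE t \<inter> bar ` funpow_orbit fE t = {}"
proof (rule ccontr)
  have bij: "bij_betw fE E E" using aut unfolding is_aut_def by blast
  have bar_t: "bar t \<in> E" "bar t \<noteq> t" "bar (bar t) = t" using gr t unfolding is_graph_def by auto
  assume "funpow_orbit fE t \<inter> bar ` funpow_orbit fE t \<noteq> {}"
  then obtain e where e: "e \<in> funpow_orbit fE t" "e \<in> funpow_orbit fE (bar t)"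
    using bar_image_funpow_orbit[OF t] by auto
  then have "t \<in> funpow_orbit fE (bar t)"
    using funpow_orbit_sym[OF fin bij t e(1)] funpow_orbit_trans[OF e(2)] by simp
  then obtain k where "(fE ^^ k) (bar t) = t" unfolding funpow_orbit_def by (metis rangeE)
  then have k: "(fE ^^ k) (bar t) = bar (bar t)" using bar_t by simp
  then have "(fE ^^ k) (bar t) = bar t" using free bar_t(1) unfolding acts_freely_def by blast
  then show False using k bar_t by simp
qed

lemma iota_bij_funpow_orbit:
  assumes gr: "is_graph V E \<iota> \<tau> bar" and fin: "finite V" and one_orbit: "V = funpow_orbit fV v0"
    and t: "t \<in> E"
  shows "bij_betw \<iota> (funpow_orbit fE t) V"
proof (rule bij_betw_imageI)
  show "inj_on \<iota> (funpow_orbit fE t)"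
  proof (rule inj_onI)
    fix e e' assume "e \<in> funpow_orbit fE t" "e' \<in> funpow_orbit fE t" and eq: "\<iota> e = \<iota> e'"
    then obtain a b where ab: "e = (fE ^^ a) t" "e' = (fE ^^ b) t"
      unfolding funpow_orbit_def by auto
    have "\<iota> t \<in> V" using gr t unfolding is_graph_def by blast
    then show "e = e'"
      using acts_freely_funpow_eq[of "\<iota> t" a b t] eq ab t funpow_edge(2)[OF t] by simp
  qed
  have "\<iota> t \<in> V" using gr t unfolding is_graph_def by blast
  moreover have "bij_betw fV V V" using aut unfolding is_aut_def by blast
  ultimately show "\<iota> ` funpow_orbit fE t = V"
    using iota_image_funpow_orbit[OF t] funpow_orbit_eq_single_orbit[OF fin _ one_orbit] by simp
qed

end

end

section \<open>Sliding an invariant set of edges along an invariant section\<close>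

lemma bij_betw_map_sum:
  assumes f: "bij_betw f A C" and g: "bij_betw g B D"
  shows "bij_betw (map_sum f g) (A <+> B) (C <+> D)"
proof (rule bij_betw_imageI)
  have "inj_on f A" "inj_on g B" using f g unfolding bij_betw_def by auto
  then show "inj_on (map_sum f g) (A <+> B)"
    unfolding inj_on_def by (intro ballI impI; elim PlusE; simp)
  have "map_sum f g ` (A <+> B) = f ` A <+> g ` B" by (simp add: Plus_def image_Un image_image)
  then show "map_sum f g ` (A <+> B) = C <+> D" using f g by (simp add: bij_betw_def)
qed

lemma invariant_set_mem_iff:
  assumes "inj_on f A" "X \<subseteq> A" "f ` X = X" "x \<in> A"
  shows "f x \<in> X \<longleftrightarrow> x \<in> X"
  using assms by (metis image_eqI inj_on_image_mem_iff)

locale equivariant_slide =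
  fixes V :: "'v set" and E :: "'e set" and \<iota> \<tau> :: "'e \<Rightarrow> 'v" and bar :: "'e \<Rightarrow> 'e"
    and fV :: "'v \<Rightarrow> 'v" and fE :: "'e \<Rightarrow> 'e" and S T :: "'e set"
  assumes finite_E: "finite E"
    and graph: "is_graph V E \<iota> \<tau> bar"
    and aut: "is_aut V E \<iota> \<tau> bar fV fE"
    and T_edges: "T \<subseteq> E" and T_section: "bij_betw \<iota> T V"
    and T_no_inversion: "T \<inter> bar ` T = {}"
    and S_edges: "S \<subseteq> E" and S_disjoint: "S \<inter> (T \<union> bar ` T) = {}"
    and S_invariant: "fE ` S = S" and T_invariant: "fE ` T = T"
begin

lemma graph_edge:
  assumes "e \<in> E"
  shows "\<iota> e \<in> V" "\<tau> e \<in> V" "bar e \<in> E" "bar e \<noteq> e" "bar (bar e) = e"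
    "\<iota> (bar e) = \<tau> e" "\<tau> (bar e) = \<iota> e"
proof -
  have *: "\<iota> e \<in> V \<and> \<tau> e \<in> V \<and> bar e \<in> E \<and> bar e \<noteq> e \<and> bar (bar e) = e \<and> \<iota> (bar e) = \<tau> e"
    if "e \<in> E" for e
    using graph that unfolding is_graph_def by blast
  show "\<iota> e \<in> V" "\<tau> e \<in> V" "bar e \<in> E" "bar e \<noteq> e" "bar (bar e) = e"
    "\<iota> (bar e) = \<tau> e" "\<tau> (bar e) = \<iota> e"
    using *[OF assms] *[of "bar e"] by simp_all
qed

lemma aut_edge:
  assumes "e \<in> E"
  shows "fE e \<in> E" "\<iota> (fE e) = fV (\<iota> e)" "\<tau> (fE e) = fV (\<tau> e)" "fE (bar e) = bar (fE e)"
  using aut assms unfolding is_aut_def bij_betw_def by auto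

lemma bij_fV: "bij_betw fV V V" and bij_fE: "bij_betw fE E E"
  using aut unfolding is_aut_def by auto

lemma fV_in_V: "x \<in> V \<Longrightarrow> fV x \<in> V"
  using bij_fV by (auto simp: bij_betw_def)

lemma inj_bar: "inj_on bar E"
  by (rule inj_on_inverseI[where g = bar]) (rule graph_edge(5))

lemma finite_V: "finite V"
proof -
  have "finite T" using T_edges finite_E by (rule finite_subset)
  then show ?thesis using T_section by (simp add: bij_betw_finite)
qed

definition T_edge :: "'v \<Rightarrow> 'e" where
  "T_edge = inv_into T \<iota>"

lemma T_edge_in_T: "x \<in> V \<Longrightarrow> T_edge x \<in> T"
  using T_section unfolding T_edge_def bij_betw_def by (auto intro: inv_into_into)

lemma iota_T_edge: "x \<in> V \<Longrightarrow> \<iota> (T_edge x) = x"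
  using T_section unfolding T_edge_def bij_betw_def by (auto intro: f_inv_into_f)

lemma T_edge_in_E: "x \<in> V \<Longrightarrow> T_edge x \<in> E"
  using T_edge_in_T T_edges by blast

lemma T_edge_iota: "e \<in> T \<Longrightarrow> T_edge (\<iota> e) = e"
  using T_section unfolding T_edge_def bij_betw_def by simp

lemma T_edge_equivariant:
  assumes "x \<in> V"
  shows "T_edge (fV x) = fE (T_edge x)"
proof -
  have "fE (T_edge x) \<in> T" using imageI[OF T_edge_in_T[OF assms], of fE] T_invariant by simp
  moreover have "\<iota> (fE (T_edge x)) = fV x"
    using T_edge_in_T[OF assms] iota_T_edge[OF assms] T_edges aut_edge(2) by auto
  ultimately show ?thesis using T_edge_iota by force
qed

lemma T_not_S:
  assumes "e \<in> T"
  shows "e \<notin> S" "bar e \<notin> S" "bar e \<notin> T"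
  using S_disjoint T_no_inversion assms by blast+

definition slide_\<tau> :: "'e \<Rightarrow> 'v" where
  "slide_\<tau> e = (if e \<in> S then \<tau> (T_edge (\<tau> e)) else \<tau> e)"

definition slide_\<iota> :: "'e \<Rightarrow> 'v" where
  "slide_\<iota> e = slide_\<tau> (bar e)"

text \<open>The blown-up graph D: \<^const>\<open>Inl\<close> x is the vertex x and \<^const>\<open>Inr\<close> x its new copy, joined
  by the new edge \<open>Inr (x, False)\<close> (with reverse \<open>Inr (x, True)\<close>).  An original edge e keeps
  its ends, except that it starts at the new copy iff \<open>e \<in> new_end_edges\<close>.\<close>

definition new_end_edges :: "'e set" where
  "new_end_edges = T \<union> bar ` S"

definition VD :: "('v + 'v) set" where
  "VD = V <+> V"

definition ED :: "('e + 'v \<times> bool) set" where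
  "ED = E <+> V \<times> UNIV"

definition \<iota>D :: "'e + 'v \<times> bool \<Rightarrow> 'v + 'v" where
  "\<iota>D = case_sum (\<lambda>e. if e \<in> new_end_edges then Inr (\<iota> e) else Inl (\<iota> e))
     (\<lambda>(x, b). if b then Inr x else Inl x)"

definition barD :: "'e + 'v \<times> bool \<Rightarrow> 'e + 'v \<times> bool" where
  "barD = map_sum bar (map_prod id Not)"

definition \<tau>D :: "'e + 'v \<times> bool \<Rightarrow> 'v + 'v" where
  "\<tau>D = \<iota>D \<circ> barD"

definition gV :: "'v + 'v \<Rightarrow> 'v + 'v" where
  "gV = map_sum fV fV"

definition gE :: "'e + 'v \<times> bool \<Rightarrow> 'e + 'v \<times> bool" where
  "gE = map_sum fE (map_prod fV id)"

definition F_split :: "('e + 'v \<times> bool) set" where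
  "F_split = Inr ` (V \<times> UNIV)"

definition F_T :: "('e + 'v \<times> bool) set" where
  "F_T = Inl ` (T \<union> bar ` T)"

lemma \<iota>D_Inl: "\<iota>D (Inl e) = (if e \<in> new_end_edges then Inr (\<iota> e) else Inl (\<iota> e))"
  by (simp add: \<iota>D_def)

lemma \<iota>D_Inr [simp]: "\<iota>D (Inr (x, b)) = (if b then Inr x else Inl x)"
  by (simp add: \<iota>D_def)

lemma barD_simps [simp]: "barD (Inl e) = Inl (bar e)" "barD (Inr (x, b)) = Inr (x, \<not> b)"
  by (simp_all add: barD_def)

lemma \<tau>D_Inl: "\<tau>D (Inl e) = \<iota>D (Inl (bar e))"
  by (simp add: \<tau>D_def)

lemma \<tau>D_Inr [simp]: "\<tau>D (Inr (x, b)) = (if b then Inl x else Inr x)"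
  by (simp add: \<tau>D_def)

lemma gV_simps [simp]: "gV (Inl x) = Inl (fV x)" "gV (Inr x) = Inr (fV x)"
  by (simp_all add: gV_def)

lemma gE_simps [simp]: "gE (Inl e) = Inl (fE e)" "gE (Inr (x, b)) = Inr (fV x, b)"
  by (simp_all add: gE_def)

lemma finite_D: "finite VD" "finite ED"
  using finite_V finite_E unfolding VD_def ED_def by auto

lemma graph_D: "is_graph VD ED \<iota>D \<tau>D barD"
  unfolding is_graph_def
proof
  fix e assume "e \<in> ED"
  then consider a where "e = Inl a" "a \<in> E" | x b where "e = Inr (x, b)" "x \<in> V"
    unfolding ED_def by auto
  then show "\<iota>D e \<in> VD \<and> \<tau>D e \<in> VD \<and> barD e \<in> ED \<and> barD e \<noteq> e \<and> barD (barD e) = e \<and>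
      \<iota>D (barD e) = \<tau>D e"
    by cases (auto simp: VD_def ED_def graph_edge \<iota>D_Inl \<tau>D_Inl)
qed

lemma new_end_edges_invariant: "new_end_edges \<subseteq> E" "fE ` new_end_edges = new_end_edges"
proof -
  show "new_end_edges \<subseteq> E" using T_edges S_edges graph_edge(3) unfolding new_end_edges_def by auto
  have "fE ` bar ` S = bar ` fE ` S"
    unfolding image_image by (rule image_cong[OF refl]) (simp add: aut_edge(4) subsetD[OF S_edges])
  then show "fE ` new_end_edges = new_end_edges"
    using T_invariant S_invariant unfolding new_end_edges_def by (simp add: image_Un)
qed

lemma aut_D: "is_aut VD ED \<iota>D \<tau>D barD gV gE"
proof -
  have "bij_betw gV VD VD" unfolding gV_def VD_def using bij_fV by (intro bij_betw_map_sum)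
  moreover have "bij_betw gE ED ED" unfolding gE_def ED_def
    using bij_fE bij_fV bij_betw_id[of UNIV]
    by (intro bij_betw_map_sum bij_betw_map_prod) (simp_all add: id_def)
  moreover have new_end: "fE a \<in> new_end_edges \<longleftrightarrow> a \<in> new_end_edges" if "a \<in> E" for a
    using invariant_set_mem_iff[OF _ new_end_edges_invariant that] bij_fE
    by (simp add: bij_betw_def)
  have \<iota>: "\<iota>D (gE e) = gV (\<iota>D e)" and bar: "gE (barD e) = barD (gE e)" if "e \<in> ED" for e
    using that new_end aut_edge unfolding ED_def by (auto simp: \<iota>D_Inl)
  moreover have "\<tau>D (gE e) = gV (\<tau>D e)" if "e \<in> ED" for e
  proof -
    have "barD e \<in> ED" using graph_D that unfolding is_graph_def by blast
    then show ?thesis using \<iota>[of "barD e"] bar[OF that] unfolding \<tau>D_def by simp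
  qed
  ultimately show ?thesis unfolding is_aut_def by blast
qed

lemma F_split_subsets: "F_split \<subseteq> ED" "barD ` F_split \<subseteq> F_split" "gE ` F_split \<subseteq> F_split"
  unfolding F_split_def ED_def using fV_in_V by auto

lemma leaf_edges_F_split: "leaf_edges \<iota>D \<tau>D (range Inr) F_split"
  unfolding leaf_edges_def F_split_def by auto

lemma F_T_cases:
  assumes "e \<in> F_T"
  obtains a where "a \<in> T" "e = Inl a" | a where "a \<in> T" "e = Inl (bar a)"
  using assms unfolding F_T_def by auto

lemma F_T_ends:
  assumes "a \<in> T"
  shows "\<iota>D (Inl a) = Inr (\<iota> a)" "\<tau>D (Inl a) = Inl (\<tau> a)"
    "\<iota>D (Inl (bar a)) = Inl (\<tau> a)" "\<tau>D (Inl (bar a)) = Inr (\<iota> a)"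
proof -
  have a: "a \<in> E" "bar (bar a) = a" "\<iota> (bar a) = \<tau> a" using assms T_edges graph_edge by auto
  have "bar a \<notin> bar ` S" using T_not_S(1)[OF assms] inj_bar S_edges a(1) by (auto dest: inj_onD)
  then have "a \<in> new_end_edges" "bar a \<notin> new_end_edges"
    using assms T_not_S(3)[OF assms] unfolding new_end_edges_def by auto
  then show "\<iota>D (Inl a) = Inr (\<iota> a)" "\<tau>D (Inl a) = Inl (\<tau> a)"
    "\<iota>D (Inl (bar a)) = Inl (\<tau> a)" "\<tau>D (Inl (bar a)) = Inr (\<iota> a)"
    using a by (simp_all add: \<iota>D_Inl \<tau>D_Inl)
qed

lemma F_T_subsets: "F_T \<subseteq> ED" "barD ` F_T \<subseteq> F_T" "gE ` F_T \<subseteq> F_T"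
proof -
  show "F_T \<subseteq> ED" unfolding F_T_def ED_def using T_edges graph_edge(3) by auto
  show "barD ` F_T \<subseteq> F_T" unfolding F_T_def using T_edges graph_edge(5) by force
  have "fE a \<in> T" "fE (bar a) = bar (fE a)" if "a \<in> T" for a
    using that T_invariant T_edges aut_edge(4) by auto
  then show "gE ` F_T \<subseteq> F_T" unfolding F_T_def by auto
qed

lemma leaf_edges_F_T: "leaf_edges \<iota>D \<tau>D (range Inr) F_T"
  unfolding leaf_edges_def
proof (intro conjI ballI impI)
  fix e assume "e \<in> F_T"
  then show "(\<iota>D e \<in> range Inr) \<noteq> (\<tau>D e \<in> range Inr)"
    by (elim F_T_cases) (auto simp: F_T_ends)
next
  have start_new: "\<exists>a\<in>T. e = Inl a \<and> \<iota>D e = Inr (\<iota> a)" if "e \<in> F_T" "\<iota>D e \<in> range Inr" for e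
    using that by (elim F_T_cases) (auto simp: F_T_ends)
  fix e e' assume "e \<in> F_T" "e' \<in> F_T" "\<iota>D e \<in> range Inr" "\<iota>D e' = \<iota>D e"
  with start_new obtain a a' where "a \<in> T" "a' \<in> T" "e = Inl a" "e' = Inl a'" "\<iota> a' = \<iota> a"
    by (metis rangeI sum.inject(2))
  then show "e' = e" using T_section unfolding bij_betw_def by (auto dest: inj_onD)
qed

lemma collapse_F_split:
  "eq_collapse VD ED \<iota>D \<tau>D barD gV gE F_split V E \<iota> \<tau> bar fV fE (case_sum id id) projl"
  unfolding eq_collapse_def
proof (intro conjI)
  have diff: "ED - F_split = Inl ` E" unfolding ED_def F_split_def by auto
  show "case_sum id id ` VD = V" unfolding VD_def by (force simp: image_iff)
  show "\<forall>x\<in>VD. \<forall>y\<in>VD.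
      case_sum id id x = case_sum id id y \<longleftrightarrow> (\<exists>es. set es \<subseteq> F_split \<and> epath \<iota>D \<tau>D x es y)"
  proof (rule collapse_fibres_if_leaf_edges[OF graph_D F_split_subsets(1,2) leaf_edges_F_split])
    show "\<forall>x\<in>VD \<inter> range Inr. \<exists>e\<in>F_split. \<iota>D e = x"
      unfolding VD_def F_split_def by (auto intro!: bexI[of _ "Inr (_, True)"])
    show "\<forall>e\<in>F_split. case_sum id id (\<iota>D e) = case_sum id id (\<tau>D e)" unfolding F_split_def by auto
    show "inj_on (case_sum id id) (VD - range Inr)" unfolding VD_def by (auto simp: inj_on_def)
  qed
  show "bij_betw projl (ED - F_split) E" unfolding diff
    by (rule bij_betw_byWitness[where f' = Inl]) auto
  show "\<forall>e\<in>ED - F_split. \<iota> (projl e) = case_sum id id (\<iota>D e) \<and> \<tau> (projl e) = case_sum id id (\<tau>D e)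
      \<and> bar (projl e) = projl (barD e)"
    unfolding diff by (auto simp: \<iota>D_Inl \<tau>D_Inl graph_edge(6))
  show "\<forall>x\<in>VD. case_sum id id (gV x) = fV (case_sum id id x)" unfolding VD_def by auto
  show "\<forall>e\<in>ED - F_split. projl (gE e) = fE (projl e)" unfolding diff by auto
qed

definition pV_T :: "'v + 'v \<Rightarrow> 'v" where
  "pV_T = case_sum id (\<tau> \<circ> T_edge)"

text \<open>After collapsing \<^const>\<open>F_T\<close>, the new edge at x takes the name of the T-edge at x.\<close>

definition pE_T :: "'e + 'v \<times> bool \<Rightarrow> 'e" where
  "pE_T = case_sum id (\<lambda>(x, b). if b then bar (T_edge x) else T_edge x)"

lemma pV_T_simps [simp]: "pV_T (Inl x) = x" "pV_T (Inr x) = \<tau> (T_edge x)"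
  by (simp_all add: pV_T_def)

lemma pE_T_simps [simp]:
  "pE_T (Inl e) = e" "pE_T (Inr (x, b)) = (if b then bar (T_edge x) else T_edge x)"
  by (simp_all add: pE_T_def)

lemma ED_minus_F_T: "ED - F_T = Inl ` (E - (T \<union> bar ` T)) \<union> Inr ` (V \<times> UNIV)"
  unfolding ED_def F_T_def using T_edges graph_edge(3) by auto

lemma bar_mem_image_iff: "e \<in> E \<Longrightarrow> X \<subseteq> E \<Longrightarrow> e \<in> bar ` X \<longleftrightarrow> bar e \<in> X"
  using graph_edge(5) by force

lemma bij_pE_T: "bij_betw pE_T (ED - F_T) E"
proof -
  define q where
    "q e = (if e \<in> T then Inr (\<iota> e, False) else if bar e \<in> T then Inr (\<tau> e, True) else Inl e)"
    for e
  have bar_T: "bar (T_edge x) \<notin> T" "bar (bar (T_edge x)) = T_edge x" "\<tau> (bar (T_edge x)) = x"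
    if "x \<in> V" for x
    using T_not_S(3) T_edge_in_T iota_T_edge T_edge_in_E graph_edge(5,7) that by auto
  have "\<forall>a\<in>ED - F_T. q (pE_T a) = a"
    unfolding q_def ED_minus_F_T using bar_mem_image_iff[OF _ T_edges] T_edge_in_T iota_T_edge bar_T
    by (auto split: if_splits)
  moreover have "\<forall>e\<in>E. pE_T (q e) = e"
  proof
    fix e assume e: "e \<in> E"
    have "T_edge (\<tau> e) = bar e" if "bar e \<in> T"
      using T_edge_iota[OF that] graph_edge(6)[OF e] by simp
    then show "pE_T (q e) = e" unfolding q_def using T_edge_iota graph_edge(5)[OF e] by auto
  qed
  moreover have "pE_T ` (ED - F_T) \<subseteq> E"
    unfolding ED_minus_F_T using T_edge_in_E graph_edge(3) by auto
  moreover have "q ` E \<subseteq> ED - F_T"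
    unfolding q_def ED_minus_F_T using bar_mem_image_iff[OF _ T_edges] graph_edge(1,2) by auto
  ultimately show ?thesis by (rule bij_betw_byWitness)
qed

lemma slide_\<iota>_pE_T:
  assumes "e \<in> ED - F_T"
  shows "slide_\<iota> (pE_T e) = pV_T (\<iota>D e)"
proof -
  consider a where "e = Inl a" "a \<in> E" "a \<notin> T" "a \<notin> bar ` T" | x b where "e = Inr (x, b)" "x \<in> V"
    using assms unfolding ED_minus_F_T by auto
  then show ?thesis
  proof cases
    case (1 a)
    then have "a \<in> new_end_edges \<longleftrightarrow> bar a \<in> S"
      using bar_mem_image_iff[OF _ S_edges] unfolding new_end_edges_def by auto
    then show ?thesis using 1 graph_edge(7) by (simp add: slide_\<iota>_def slide_\<tau>_def \<iota>D_Inl)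
  next
    case (2 x b)
    have "T_edge x \<notin> S" "bar (T_edge x) \<notin> S" using T_not_S T_edge_in_T[OF 2(2)] by blast+
    then show ?thesis
      using 2 iota_T_edge[OF 2(2)] graph_edge(5,7)[OF T_edge_in_E[OF 2(2)]]
      by (simp add: slide_\<iota>_def slide_\<tau>_def)
  qed
qed

lemma bar_pE_T: "e \<in> ED \<Longrightarrow> bar (pE_T e) = pE_T (barD e)"
  unfolding ED_def using graph_edge(5) T_edge_in_E by auto

lemma barD_ED_minus_F_T: "e \<in> ED - F_T \<Longrightarrow> barD e \<in> ED - F_T"
  using graph_D F_T_subsets(2) unfolding is_graph_def
  by (metis DiffD1 DiffD2 DiffI image_subset_iff)

lemma collapse_F_T: "eq_collapse VD ED \<iota>D \<tau>D barD gV gE F_T V E slide_\<iota> slide_\<tau> bar fV fE pV_T pE_T"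
  unfolding eq_collapse_def
proof (intro conjI)
  show "pV_T ` VD = V" unfolding VD_def using T_edge_in_E graph_edge(2) by (force simp: image_iff)
  show "\<forall>x\<in>VD. \<forall>y\<in>VD. pV_T x = pV_T y \<longleftrightarrow> (\<exists>es. set es \<subseteq> F_T \<and> epath \<iota>D \<tau>D x es y)"
  proof (rule collapse_fibres_if_leaf_edges[OF graph_D F_T_subsets(1,2) leaf_edges_F_T])
    have "Inl (T_edge x) \<in> F_T" "\<iota>D (Inl (T_edge x)) = Inr x" if "x \<in> V" for x
      using T_edge_in_T[OF that] iota_T_edge[OF that] F_T_ends(1) unfolding F_T_def by auto
    then show "\<forall>x\<in>VD \<inter> range Inr. \<exists>e\<in>F_T. \<iota>D e = x" unfolding VD_def by blast
    show "\<forall>e\<in>F_T. pV_T (\<iota>D e) = pV_T (\<tau>D e)"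
      by (auto elim!: F_T_cases simp: F_T_ends T_edge_iota)
    show "inj_on pV_T (VD - range Inr)" unfolding VD_def by (auto simp: inj_on_def)
  qed
  show "bij_betw pE_T (ED - F_T) E" by (rule bij_pE_T)
  have "slide_\<tau> (pE_T e) = pV_T (\<tau>D e)" if "e \<in> ED - F_T" for e
  proof -
    have "pE_T e \<in> E" using bij_pE_T that by (auto simp: bij_betw_def)
    then have "slide_\<tau> (pE_T e) = slide_\<iota> (bar (pE_T e))" by (simp add: slide_\<iota>_def graph_edge(5))
    also have "\<dots> = slide_\<iota> (pE_T (barD e))" using bar_pE_T that by simp
    also have "\<dots> = pV_T (\<tau>D e)"
      using slide_\<iota>_pE_T[OF barD_ED_minus_F_T[OF that]] by (simp add: \<tau>D_def)
    finally show ?thesis .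
  qed
  then show "\<forall>e\<in>ED - F_T. slide_\<iota> (pE_T e) = pV_T (\<iota>D e) \<and> slide_\<tau> (pE_T e) = pV_T (\<tau>D e)
      \<and> bar (pE_T e) = pE_T (barD e)"
    using slide_\<iota>_pE_T bar_pE_T by blast
  show "\<forall>x\<in>VD. pV_T (gV x) = fV (pV_T x)"
    unfolding VD_def using T_edge_equivariant T_edge_in_E aut_edge(3) by auto
  show "\<forall>e\<in>ED - F_T. pE_T (gE e) = fE (pE_T e)"
    unfolding ED_def using T_edge_equivariant T_edge_in_E aut_edge(4) by auto
qed

theorem slide_eq_whitehead_move: "eq_whitehead_move V E \<iota> \<tau> bar fV fE V E slide_\<iota> slide_\<tau> bar fV fE"
  using finite_D graph_D aut_D
    is_forest_if_leaf_edges[OF graph_D F_split_subsets(1,2) leaf_edges_F_split] F_split_subsets(3)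
    is_forest_if_leaf_edges[OF graph_D F_T_subsets(1,2) leaf_edges_F_T] F_T_subsets(3)
    collapse_F_split collapse_F_T
  by (rule eq_whitehead_moveI)

end

lemma equivariant_slide_funpow_orbits:
  assumes fin: "finite V" "finite E" and gr: "is_graph V E \<iota> \<tau> bar"
    and aut: "is_aut V E \<iota> \<tau> bar fV fE" and free: "acts_freely V E bar fV fE"
    and one_orbit: "V = funpow_orbit fV v0" and st: "s \<in> E" "t \<in> E"
    and distinct_orbits: "s \<notin> funpow_orbit fE t" "s \<notin> funpow_orbit fE (bar t)"
  shows "equivariant_slide V E \<iota> \<tau> bar fV fE (funpow_orbit fE s) (funpow_orbit fE t)"
proof
  have bij_fE: "bij_betw fE E E" and fE_E: "fE ` E \<subseteq> E"
    using aut unfolding is_aut_def bij_betw_def by auto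
  show "bij_betw \<iota> (funpow_orbit fE t) V"
    using iota_bij_funpow_orbit[OF aut free gr fin(1) one_orbit st(2)] .
  show "funpow_orbit fE t \<inter> bar ` funpow_orbit fE t = {}"
    using funpow_orbit_no_inversion[OF aut free gr fin(2) st(2)] .
  show "funpow_orbit fE s \<inter> (funpow_orbit fE t \<union> bar ` funpow_orbit fE t) = {}"
    using distinct_orbits funpow_orbit_disjoint[OF fin(2) bij_fE st(1)]
      bar_image_funpow_orbit[OF aut st(2)]
    by (simp add: Int_Un_distrib)
  show "funpow_orbit fE s \<subseteq> E" "funpow_orbit fE t \<subseteq> E"
    using funpow_orbit_subset[OF fE_E] st by auto
  show "fE ` funpow_orbit fE s = funpow_orbit fE s" "fE ` funpow_orbit fE t = funpow_orbit fE t"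
    using funpow_orbit_image[OF fin(2) bij_fE] st by auto
qed (use fin gr aut in auto)

theorem lemma6p4:
  fixes V :: "'v set" and E :: "'e set" and \<iota> \<tau> :: "'e \<Rightarrow> 'v" and bar :: "'e \<Rightarrow> 'e"
    and fV :: "'v \<Rightarrow> 'v" and fE :: "'e \<Rightarrow> 'e" and s t :: 'e
  assumes fin: "finite V" "finite E"
    and gr: "is_graph V E \<iota> \<tau> bar"
    and conn: "connected_graph V E \<iota> \<tau>"
    and aut: "is_aut V E \<iota> \<tau> bar fV fE"
    and free: "acts_freely V E bar fV fE"
    and one_orbit: "\<exists>v0\<in>V. V = {(fV ^^ k) v0 | k. True}"
    and st: "s \<in> E" "t \<in> E"
    and distinct_orbits: "\<forall>k. (fE ^^ k) t \<noteq> s \<and> (fE ^^ k) (bar t) \<noteq> s"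
    and path: "\<tau> s = \<iota> t"
  shows "\<exists>\<iota>' \<tau>'.
     (\<forall>k. \<tau>' ((fE ^^ k) s) = \<tau> ((fE ^^ k) t)) \<and>
     (\<forall>e\<in>E. (\<forall>k. e \<noteq> (fE ^^ k) s) \<longrightarrow> \<tau>' e = \<tau> e) \<and>
     (\<forall>e\<in>E. \<iota>' e = \<tau>' (bar e)) \<and>
     eq_whitehead_move V E \<iota> \<tau> bar fV fE V E \<iota>' \<tau>' bar fV fE"
proof -
  define S where "S = funpow_orbit fE s"
  define T where "T = funpow_orbit fE t"
  obtain v0 where v0: "V = funpow_orbit fV v0" using one_orbit unfolding funpow_orbit_def by blast
  have "s \<notin> funpow_orbit fE t" "s \<notin> funpow_orbit fE (bar t)"
    using distinct_orbits unfolding funpow_orbit_def by auto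
  then interpret equivariant_slide V E \<iota> \<tau> bar fV fE S T
    unfolding S_def T_def by (rule equivariant_slide_funpow_orbits[OF fin gr aut free v0 st])
  have "slide_\<tau> ((fE ^^ k) s) = \<tau> ((fE ^^ k) t)" for k
  proof -
    have "(fE ^^ k) s \<in> S" "(fE ^^ k) t \<in> T" unfolding S_def T_def by (rule funpow_orbitI)+
    moreover have "\<tau> ((fE ^^ k) s) = \<iota> ((fE ^^ k) t)" using funpow_edge[OF aut] st path by simp
    ultimately show ?thesis using T_edge_iota unfolding slide_\<tau>_def by simp
  qed
  moreover have "slide_\<tau> e = \<tau> e" if "\<forall>k. e \<noteq> (fE ^^ k) s" for e
  proof -
    have "e \<notin> S" using that unfolding S_def funpow_orbit_def by auto
    then show ?thesis unfolding slide_\<tau>_def by simp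
  qed
  ultimately show ?thesis
    using slide_eq_whitehead_move
    by (intro exI[of _ slide_\<tau>, THEN exI[of _ slide_\<iota>]]) (simp add: slide_\<iota>_def)
qed

end
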